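(* Let $a_1,\dots,a_n$ be nonzero integers, consider the equation $a_1x_1+\cdots+a_nx_n=0$, and for $1\le l\le n$ let $$S_l=-\frac{\left(\sum_{i=1}^n a_i\right)-a_l}{a_l}.$$ Suppose there exists an upper triangular $m\times m$ matrix $(c_{i,j})$ whose entries $c_{i,j}$ with $i\le j$ are all positive, each equal to $S_l$ for some $1\le l\le n$, and which has the linkage property. Then the equation is strongly $m$-regular; that is, for every finite collection of inequalities $A_{j,1}x_1+\cdots+A_{j,n}x_n\neq0$ ($1\le j\le k$, $A_{j,i}\in\mathbb{Z}$), none of which is a multiple of the equation, the system consisting of the equation and these inequalities is $m$-regular.
   Context: An upper triangular $m\times m$ matrix $(c_{i,j})$ (with $c_{i,j}=0$ for $i>j$) has the linkage property if for every integer $i$ with $1\le i\le m-1$ and every $j$ with $i<j\le m$, one has $c_{1,i}\cdot c_{i+1,j}=c_{1,j}$. An inequality $A_{1}x_1+\cdots+A_nx_n\neq0$ is a multiple of the equation if $(A_1,\dots,A_n)$ is a scalar multiple of $(a_1,\dots,a_n)$. A system of the equation together with finitely many inequalities is $m$-regular if for every coloring of the positive integers with $m$ colors there exist positive integers $x_1,\dots,x_n$, all of the same color, satisfying the equation and all inequalities. The equation is strongly $m$-regular if adding any finite set of integer-coefficient inequalities, none a multiple of the equation, yields an $m$-regular system. *)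

theory Defs
  imports Main "HOL.Rat"
begin

text \<open>Coefficients of the equation are indexed 1..n: a :: nat \<Rightarrow> int.
  Variables x_1..x_n are positive integers, represented as nat with x i > 0.
  An m-colouring of the positive integers is chi :: nat \<Rightarrow> nat with chi x < m for x > 0.\<close>

definition lin_form :: "nat \<Rightarrow> (nat \<Rightarrow> int) \<Rightarrow> (nat \<Rightarrow> nat) \<Rightarrow> int" where
  "lin_form n A x = (\<Sum>i = 1..n. A i * int (x i))"

definition S_val :: "nat \<Rightarrow> (nat \<Rightarrow> int) \<Rightarrow> nat \<Rightarrow> rat" where
  "S_val n a l = - ((of_int (\<Sum>i = 1..n. a i) - of_int (a l)) / of_int (a l))"

definition is_multiple :: "nat \<Rightarrow> (nat \<Rightarrow> int) \<Rightarrow> (nat \<Rightarrow> int) \<Rightarrow> bool" where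
  "is_multiple n a A \<longleftrightarrow> (\<exists>r::rat. \<forall>i\<in>{1..n}. of_int (A i) = r * of_int (a i))"

definition m_regular :: "nat \<Rightarrow> nat \<Rightarrow> (nat \<Rightarrow> int) \<Rightarrow> (nat \<Rightarrow> int) list \<Rightarrow> bool" where
  "m_regular m n a ineqs \<longleftrightarrow>
     (\<forall>chi :: nat \<Rightarrow> nat. (\<forall>x. 0 < x \<longrightarrow> chi x < m) \<longrightarrow>
        (\<exists>x :: nat \<Rightarrow> nat. (\<forall>i\<in>{1..n}. 0 < x i) \<and>
            (\<exists>col. \<forall>i\<in>{1..n}. chi (x i) = col) \<and>
            lin_form n a x = 0 \<and>
            (\<forall>A\<in>set ineqs. lin_form n A x \<noteq> 0)))"

definition strongly_m_regular :: "nat \<Rightarrow> nat \<Rightarrow> (nat \<Rightarrow> int) \<Rightarrow> bool" where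
  "strongly_m_regular m n a \<longleftrightarrow>
     (\<forall>ineqs :: (nat \<Rightarrow> int) list. (\<forall>A\<in>set ineqs. \<not> is_multiple n a A) \<longrightarrow>
        m_regular m n a ineqs)"

definition upper_triangular :: "nat \<Rightarrow> (nat \<Rightarrow> nat \<Rightarrow> rat) \<Rightarrow> bool" where
  "upper_triangular m c \<longleftrightarrow> (\<forall>i\<in>{1..m}. \<forall>j\<in>{1..m}. j < i \<longrightarrow> c i j = 0)"

definition linkage_property :: "nat \<Rightarrow> (nat \<Rightarrow> nat \<Rightarrow> rat) \<Rightarrow> bool" where
  "linkage_property m c \<longleftrightarrow>
     (\<forall>i. 1 \<le> i \<and> i \<le> m - 1 \<longrightarrow> (\<forall>j. i < j \<and> j \<le> m \<longrightarrow> c 1 i * c (i + 1) j = c 1 j))"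

end

theory Submission
  imports Defs
begin

text \<open>Given an \<open>m\<close>-colouring, scale the first row of the matrix, preceded by a \<open>1\<close>, to positive
  integers \<open>z\<^sub>0, \<dots>, z\<^sub>m\<close>. Colouring \<open>t\<close> by the colours of \<open>z\<^sub>0 t, \<dots>, z\<^sub>m t\<close>, van der Waerden's
  theorem gives a long progression \<open>s + u d\<close> on which the colour of \<open>z\<^sub>i (s + u d)\<close> depends only
  on \<open>i\<close>, and by pigeonhole two indices \<open>i < j\<close> get the same colour. The linkage property makes
  \<open>z\<^sub>j / z\<^sub>i\<close> one of the numbers \<open>S\<^sub>l\<close>. Then \<open>x\<^sub>l = z\<^sub>j (s + W d)\<close>, \<open>x\<^sub>k = z\<^sub>i (s + V\<^sub>k d)\<close> with
  \<open>V\<^sub>k = M + S' t\<^sub>k\<close>, \<open>W = M + \<Sum> a\<^sub>k t\<^sub>k\<close> (where \<open>S' = -a\<^sub>l S\<^sub>l\<close>) solves the equation for every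
  parameter vector \<open>t\<close>, while each inequality becomes an affine form in \<open>t\<close> that is non-constant
  because the inequality is not a multiple of the equation; a bounded \<open>t\<close> avoids all their zeros.\<close>

section \<open>Van der Waerden's theorem\<close>

definition mono_progression :: "(nat \<Rightarrow> 'c) \<Rightarrow> nat \<Rightarrow> nat \<Rightarrow> bool" where
  "mono_progression \<chi> k N \<longleftrightarrow> (\<exists>a d. 0 < d \<and> a + k * d < N \<and> (\<forall>i\<le>k. \<chi> (a + i * d) = \<chi> a))"

definition vdw_bound :: "nat \<Rightarrow> nat \<Rightarrow> nat \<Rightarrow> bool" where
  "vdw_bound k r N \<longleftrightarrow> (\<forall>\<chi>. (\<forall>x<N. \<chi> x < r) \<longrightarrow> mono_progression \<chi> k N)"

text \<open>The colour-focusing configurations of the classical proof: \<open>s\<close> monochromatic progressions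
  with distinct colours whose next terms all equal the focus \<open>f\<close>.\<close>

definition focused :: "(nat \<Rightarrow> 'c) \<Rightarrow> nat \<Rightarrow> nat \<Rightarrow> nat \<Rightarrow> bool" where
  "focused \<chi> k s N \<longleftrightarrow> (\<exists>f b d. f < N \<and>
     (\<forall>j<s. 0 < d j \<and> b j + Suc k * d j = f \<and> (\<forall>i\<le>k. \<chi> (b j + i * d j) = \<chi> (b j))) \<and>
     inj_on (\<lambda>j. \<chi> (b j)) {..<s})"

lemma mono_progression_shift:
  assumes "mono_progression (\<lambda>u. \<chi> (c + u)) k L" "c + L \<le> N"
  shows "mono_progression \<chi> k N"
proof -
  obtain a d where "0 < d" "a + k * d < L" "\<forall>i\<le>k. \<chi> (c + (a + i * d)) = \<chi> (c + a)"
    using assms(1) unfolding mono_progression_def by blast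
  then show ?thesis
    using assms(2) unfolding mono_progression_def
    by (intro exI[of _ "c + a"] exI[of _ d]) (auto simp: add.assoc)
qed

lemma focused_mono: "focused \<chi> k s L \<Longrightarrow> L \<le> N \<Longrightarrow> focused \<chi> k s N"
  unfolding focused_def using less_le_trans by blast

lemma mono_progression_from_focus:
  assumes "b + Suc k * d = f" "f < N" "0 < d" "\<forall>i\<le>k. \<chi> (b + i * d) = \<chi> b" "\<chi> f = \<chi> b"
  shows "mono_progression \<chi> (Suc k) N"
proof -
  have "\<chi> (b + i * d) = \<chi> b" if "i \<le> Suc k" for i
    using assms that by (cases "i = Suc k") auto
  then show ?thesis
    using assms(1-3) unfolding mono_progression_def by (metis)
qed

lemma vdw_bound_pos: "vdw_bound k r N \<Longrightarrow> 0 < N"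
  unfolding vdw_bound_def mono_progression_def by (cases N) auto

lemma vdw_bound_finite_colours:
  assumes "vdw_bound k (card C) N" "finite C" "\<forall>x<N. \<psi> x \<in> C"
  shows "mono_progression \<psi> k N"
proof -
  obtain h where h: "bij_betw h C {0..<card C}"
    using ex_bij_betw_finite_nat[OF assms(2)] by blast
  then have "\<forall>x<N. h (\<psi> x) < card C"
    using assms(3) bij_betwE by fastforce
  then have "mono_progression (\<lambda>x. h (\<psi> x)) k N"
    using assms(1) unfolding vdw_bound_def by simp
  then obtain a d where ad: "0 < d" "a + k * d < N" "\<forall>i\<le>k. h (\<psi> (a + i * d)) = h (\<psi> a)"
    unfolding mono_progression_def by blast
  have "\<psi> (a + i * d) = \<psi> a" if "i \<le> k" for i
  proof -
    have "i * d \<le> k * d" using that by simp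
    then have "a + i * d < N" "a < N" using ad(2) by linarith+
    then have "\<psi> (a + i * d) \<in> C" "\<psi> a \<in> C"
      using assms(3) by blast+
    moreover have "h (\<psi> (a + i * d)) = h (\<psi> a)"
      using ad(3) that by simp
    ultimately show ?thesis
      using bij_betw_imp_inj_on[OF h] by (simp add: inj_on_eq_iff)
  qed
  then show ?thesis
    using ad unfolding mono_progression_def by blast
qed

lemma block_progression:
  assumes "vdw_bound k (r ^ L) M" "\<forall>x<M * L. \<chi> x < r"
  shows "\<exists>t e. 0 < e \<and> e \<le> M \<and> t + k * e < M \<and>
           (\<forall>i\<le>k. \<forall>u<L. \<chi> ((t + i * e) * L + u) = \<chi> (t * L + u))"
proof -
  \<comment> \<open>colour the block \<open>[t L, t L + L)\<close> by its colour pattern, one of \<open>r ^ L\<close> colours\<close>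
  define C where "C = {xs. set xs \<subseteq> {..<r} \<and> length xs = L}"
  define block where "block t = map (\<lambda>u. \<chi> (t * L + u)) [0..<L]" for t
  have "card C = r ^ L"
    unfolding C_def by (simp add: card_lists_length_eq)
  moreover have "block t \<in> C" if "t < M" for t
  proof -
    have "t * L + u < M * L" if "u < L" for u
    proof -
      have "t * L + u < Suc t * L" using that by simp
      also have "\<dots> \<le> M * L" using \<open>t < M\<close> by (intro mult_le_mono1) simp
      finally show ?thesis .
    qed
    then show ?thesis
      using assms(2) unfolding C_def block_def by auto
  qed
  moreover have "finite C"
    unfolding C_def by (rule finite_lists_length_eq) simp
  ultimately have "mono_progression block k M"
    using vdw_bound_finite_colours[of k C M block] assms(1) by simp
  then obtain t e where te: "0 < e" "t + k * e < M" "\<forall>i\<le>k. block (t + i * e) = block t"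
    unfolding mono_progression_def by blast
  have periodic: "\<forall>i\<le>k. \<forall>u<L. \<chi> ((t + i * e) * L + u) = \<chi> (t * L + u)"
  proof (intro allI impI)
    fix i u assume "i \<le> k" "u < L"
    then have "block (t + i * e) ! u = block t ! u" using te(3) by simp
    then show "\<chi> ((t + i * e) * L + u) = \<chi> (t * L + u)"
      using \<open>u < L\<close> unfolding block_def by simp
  qed
  show ?thesis
  proof (cases "k = 0")
    case True
    then show ?thesis using te by (intro exI[of _ t] exI[of _ 1]) auto
  next
    case False
    then have "e \<le> k * e" by simp
    then have "e \<le> M" using te(2) by linarith
    then show ?thesis using te(1,2) periodic by blast
  qed
qed

lemma focused_extend:
  assumes foc: "focused (\<lambda>u. \<chi> (c + u)) k s L"
    and periodic: "\<forall>i\<le>k. \<forall>u<L. \<chi> (c + i * D + u) = \<chi> (c + u)"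
    and "0 < D"
  shows "mono_progression (\<lambda>u. \<chi> (c + u)) (Suc k) L \<or> focused \<chi> k (Suc s) (c + Suc k * D + L)"
proof -
  obtain f b d where f: "f < L"
    and prog: "\<forall>j<s. 0 < d j \<and> b j + Suc k * d j = f \<and> (\<forall>i\<le>k. \<chi> (c + (b j + i * d j)) = \<chi> (c + b j))"
    and distinct: "inj_on (\<lambda>j. \<chi> (c + b j)) {..<s}"
    using foc unfolding focused_def by blast
  show ?thesis
  proof (cases "\<exists>j<s. \<chi> (c + f) = \<chi> (c + b j)")
    case True
    then obtain j where "j < s" "\<chi> (c + f) = \<chi> (c + b j)" by blast
    then have "mono_progression (\<lambda>u. \<chi> (c + u)) (Suc k) L"
      using prog f by (intro mono_progression_from_focus[of "b j" k "d j" f]) auto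
    then show ?thesis ..
  next
    case False
    \<comment> \<open>copy the progressions along the \<open>k + 1\<close> equal blocks and add the focus as a new one\<close>
    define b' where "b' j = c + (if j < s then b j else f)" for j
    define d' where "d' j = (if j < s then d j else 0) + D" for j
    have ends: "b' j + Suc k * d' j = c + f + Suc k * D" if "j < Suc s" for j
      using prog by (auto simp: b'_def d'_def algebra_simps)
    have mono: "\<chi> (b' j + i * d' j) = \<chi> (b' j)" if "j < Suc s" "i \<le> k" for i j
    proof -
      define u where "u = (if j < s then b j + i * d j else f)"
      have "u < L"
      proof (cases "j < s")
        case True
        have "i * d j \<le> Suc k * d j" using \<open>i \<le> k\<close> by (intro mult_le_mono1) simp
        then show ?thesis using True prog f unfolding u_def by fastforce
      qed (use f u_def in simp)
      have "b' j + i * d' j = c + i * D + u"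
        by (simp add: b'_def d'_def u_def algebra_simps)
      then have "\<chi> (b' j + i * d' j) = \<chi> (c + u)"
        using periodic \<open>u < L\<close> \<open>i \<le> k\<close> by simp
      also have "\<dots> = \<chi> (b' j)"
        using prog \<open>i \<le> k\<close> by (simp add: u_def b'_def)
      finally show ?thesis .
    qed
    have "inj_on (\<lambda>j. \<chi> (b' j)) {..<s}"
      using distinct by (rule inj_on_cong[THEN iffD1, rotated]) (simp add: b'_def)
    moreover have "\<chi> (b' s) \<notin> (\<lambda>j. \<chi> (b' j)) ` {..<s}"
      using False by (auto simp: b'_def)
    ultimately have "inj_on (\<lambda>j. \<chi> (b' j)) {..<Suc s}"
      by (simp add: lessThan_Suc)
    moreover have "0 < d' j" for j
      using \<open>0 < D\<close> by (simp add: d'_def)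
    moreover have "c + f + Suc k * D < c + Suc k * D + L"
      using f by simp
    ultimately have "focused \<chi> k (Suc s) (c + Suc k * D + L)"
      unfolding focused_def using ends mono by blast
    then show ?thesis ..
  qed
qed

lemma focused_or_mono_progression:
  fixes r :: nat
  assumes vdw: "\<And>r. \<exists>N. vdw_bound k r N"
  shows "\<exists>N>0. \<forall>\<chi>. (\<forall>x<N. \<chi> x < r) \<longrightarrow> mono_progression \<chi> (Suc k) N \<or> focused \<chi> k s N"
proof (induction s)
  case 0
  show ?case by (intro exI[of _ 1]) (auto simp: focused_def)
next
  case (Suc s)
  then obtain L where "0 < L"
    and L: "\<And>\<chi>. \<forall>x<L. \<chi> x < r \<Longrightarrow> mono_progression \<chi> (Suc k) L \<or> focused \<chi> k s L"
    by blast
  obtain M where M: "vdw_bound k (r ^ L) M"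
    using vdw by blast
  have "mono_progression \<chi> (Suc k) (2 * M * L) \<or> focused \<chi> k (Suc s) (2 * M * L)"
    if bounded: "\<forall>x<2 * M * L. \<chi> x < r" for \<chi>
  proof -
    obtain t e where e: "0 < e" "e \<le> M" "t + k * e < M"
      and periodic: "\<forall>i\<le>k. \<forall>u<L. \<chi> ((t + i * e) * L + u) = \<chi> (t * L + u)"
      using block_progression[OF M, of \<chi>] bounded by auto
    have fits: "t * L + Suc k * (e * L) + L \<le> 2 * M * L"
    proof -
      have "t * L + Suc k * (e * L) + L = (t + k * e + 1 + e) * L"
        by (simp add: algebra_simps)
      also have "\<dots> \<le> (2 * M) * L"
        using e by (intro mult_le_mono1) linarith
      finally show ?thesis by simp
    qed
    have periodic': "\<forall>i\<le>k. \<forall>u<L. \<chi> (t * L + i * (e * L) + u) = \<chi> (t * L + u)"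
      using periodic by (simp add: algebra_simps)
    have "mono_progression (\<lambda>u. \<chi> (t * L + u)) (Suc k) L \<or> focused (\<lambda>u. \<chi> (t * L + u)) k s L"
      using L bounded fits by simp
    moreover have "mono_progression \<chi> (Suc k) (2 * M * L)"
      if "mono_progression (\<lambda>u. \<chi> (t * L + u)) (Suc k) L"
      using that by (rule mono_progression_shift) (use fits in simp)
    moreover have "focused \<chi> k (Suc s) (2 * M * L)"
      if "focused \<chi> k (Suc s) (t * L + Suc k * (e * L) + L)"
      using that fits by (rule focused_mono)
    ultimately show ?thesis
      using focused_extend[OF _ periodic'] \<open>0 < L\<close> e(1) by auto
  qed
  moreover have "0 < 2 * M * L"
    using vdw_bound_pos[OF M] \<open>0 < L\<close> by simp
  ultimately show ?case by blast
qed

theorem van_der_waerden: "\<exists>N. vdw_bound k r N"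
proof (induction k arbitrary: r)
  case 0
  show ?case
    unfolding vdw_bound_def mono_progression_def by (intro exI[of _ 1]) auto
next
  case (Suc k)
  obtain N where N: "\<And>\<chi>. \<forall>x<N. \<chi> x < r \<Longrightarrow> mono_progression \<chi> (Suc k) N \<or> focused \<chi> k r N"
    using focused_or_mono_progression[OF Suc.IH, of r r] by blast
  have "mono_progression \<chi> (Suc k) N" if bounded: "\<forall>x<N. \<chi> x < r" for \<chi>
    using N[OF bounded]
  proof
    assume "focused \<chi> k r N"
    then obtain f b d where f: "f < N"
      and prog: "\<forall>j<r. 0 < d j \<and> b j + Suc k * d j = f \<and> (\<forall>i\<le>k. \<chi> (b j + i * d j) = \<chi> (b j))"
      and distinct: "inj_on (\<lambda>j. \<chi> (b j)) {..<r}"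
      unfolding focused_def by blast
    \<comment> \<open>the \<open>r\<close> progressions use all \<open>r\<close> colours, so one of them shares the colour of the focus\<close>
    have "(\<lambda>j. \<chi> (b j)) ` {..<r} \<subseteq> {..<r}"
      using bounded prog f by (fastforce dest: le_add1[THEN le_less_trans])
    then have "(\<lambda>j. \<chi> (b j)) ` {..<r} = {..<r}"
      using distinct by (simp add: endo_inj_surj)
    moreover have "\<chi> f < r"
      using bounded f by blast
    ultimately obtain j where "j < r" "\<chi> f = \<chi> (b j)"
      by (metis imageE lessThan_iff)
    then show ?thesis
      using prog f by (intro mono_progression_from_focus[of "b j" k "d j" f]) auto
  qed
  then show ?case
    unfolding vdw_bound_def by blast
qed

section \<open>Monochromatic solutions\<close>

lemma monochromatic_dilated_progressions:
  fixes chi z :: "nat \<Rightarrow> nat"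
  assumes colouring: "\<forall>x. 0 < x \<longrightarrow> chi x < m" and pos: "\<forall>i\<le>m. 0 < z i"
  shows "\<exists>i j s d col. i < j \<and> j \<le> m \<and> 0 < s \<and> 0 < d \<and>
           (\<forall>u\<le>K. chi (z i * (s + u * d)) = col \<and> chi (z j * (s + u * d)) = col)"
proof -
  define C where "C = {xs. set xs \<subseteq> {..<m} \<and> length xs = Suc m}"
  define colours where "colours t = map (\<lambda>i. chi (z i * Suc t)) [0..<Suc m]" for t
  obtain N where "vdw_bound K (m ^ Suc m) N"
    using van_der_waerden by blast
  moreover have "card C = m ^ Suc m" "finite C"
    unfolding C_def by (simp_all add: card_lists_length_eq finite_lists_length_eq)
  moreover have "colours t \<in> C" for t
    using colouring pos unfolding C_def colours_def by auto
  ultimately have "mono_progression colours K N"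
    using vdw_bound_finite_colours[of K C N colours] by simp
  then obtain a d where "0 < d" and same: "\<forall>u\<le>K. colours (a + u * d) = colours a"
    unfolding mono_progression_def by blast
  have same_colour: "chi (z i * (Suc a + u * d)) = chi (z i * Suc a)" if "u \<le> K" "i \<le> m" for i u
  proof -
    have "colours (a + u * d) ! i = colours a ! i"
      using same that(1) by simp
    then show ?thesis
      using that(2) unfolding colours_def by (simp del: upt_Suc)
  qed
  define F where "F i = chi (z i * Suc a)" for i
  have "\<not> inj_on F {..m}"
  proof
    assume "inj_on F {..m}"
    moreover have "F ` {..m} \<subseteq> {..<m}"
      using colouring pos unfolding F_def by auto
    ultimately have "card {..m} \<le> card {..<m}"
      using finite_lessThan by (rule card_inj_on_le)
    then show False by simp
  qed
  then have "\<exists>i j. i < j \<and> j \<le> m \<and> F i = F j"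
    unfolding inj_on_def by (metis atMost_iff linorder_neqE_nat)
  then obtain i j where ij: "i < j" "j \<le> m" "F i = F j"
    by blast
  then have "\<forall>u\<le>K. chi (z i * (Suc a + u * d)) = F i \<and> chi (z j * (Suc a + u * d)) = F i"
    using same_colour unfolding F_def by simp
  then show ?thesis
    using ij(1,2) \<open>0 < d\<close> by blast
qed

definition augmented_first_row :: "(nat \<Rightarrow> nat \<Rightarrow> rat) \<Rightarrow> nat \<Rightarrow> rat" where
  "augmented_first_row c i = (if i = 0 then 1 else c 1 i)"

lemma augmented_first_row_pos:
  assumes pos: "\<forall>i\<in>{1..m}. \<forall>j\<in>{1..m}. i \<le> j \<longrightarrow> 0 < c i j" and "i \<le> m"
  shows "0 < augmented_first_row c i"
proof (cases "i = 0")
  case False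
  then have "1 \<in> {1..m}" "i \<in> {1..m}" "1 \<le> i"
    using \<open>i \<le> m\<close> by auto
  then show ?thesis
    using pos False unfolding augmented_first_row_def by simp
qed (simp add: augmented_first_row_def)

lemma augmented_first_row_ratio:
  assumes entries: "\<forall>i\<in>{1..m}. \<forall>j\<in>{1..m}. i \<le> j \<longrightarrow> (\<exists>l\<in>{1..n}. c i j = S_val n a l)"
    and link: "linkage_property m c" and "i < j" "j \<le> m"
  shows "\<exists>l\<in>{1..n}. augmented_first_row c j = augmented_first_row c i * S_val n a l"
proof (cases "i = 0")
  case True
  have "1 \<in> {1..m}" "j \<in> {1..m}" "1 \<le> j"
    using True assms(3,4) by auto
  then obtain l where "l \<in> {1..n}" "c 1 j = S_val n a l"
    using entries by blast
  then show ?thesis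
    using True assms(3) by (auto simp: augmented_first_row_def)
next
  case False
  then have "c 1 i * c (i + 1) j = c 1 j"
    using link assms(3,4) unfolding linkage_property_def by auto
  moreover have "i + 1 \<in> {1..m}" "j \<in> {1..m}" "i + 1 \<le> j"
    using assms(3,4) by auto
  moreover obtain l where "l \<in> {1..n}" "c (i + 1) j = S_val n a l"
    using entries calculation(2-4) by blast
  ultimately show ?thesis
    using False assms(3) by (intro bexI[of _ l]) (auto simp: augmented_first_row_def)
qed

lemma common_denominator:
  fixes q :: "'i \<Rightarrow> rat"
  assumes "finite I"
  shows "\<exists>D::nat. 0 < D \<and> (\<forall>i\<in>I. of_nat D * q i \<in> \<int>)"
  using assms
proof (induction I rule: finite_induct)
  case empty
  show ?case by (intro exI[of _ 1]) simp
next
  case (insert i I)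
  then obtain D :: nat where D: "0 < D" "\<forall>j\<in>I. of_nat D * q j \<in> \<int>"
    by blast
  obtain p d where pd: "quotient_of (q i) = (p, d)"
    by (cases "quotient_of (q i)")
  have "0 < d" "q i = of_int p / of_int d"
    using quotient_of_denom_pos[OF pd] quotient_of_div[OF pd] by simp_all
  then have qi: "of_nat (D * nat d) * q i = of_int (int D * p)"
    by simp
  have qj: "of_nat (D * nat d) * q j = (of_nat D * q j) * of_int d" for j
    using \<open>0 < d\<close> by simp
  have "of_nat (D * nat d) * q j \<in> \<int>" if "j \<in> insert i I" for j
  proof (cases "j = i")
    case True
    then show ?thesis using qi by (metis Ints_of_int)
  next
    case False
    then have "of_nat D * q j \<in> \<int>"
      using D(2) that by simp
    then show ?thesis
      unfolding qj by (rule Ints_mult[OF _ Ints_of_int])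
  qed
  then show ?case
    using D(1) \<open>0 < d\<close> by (intro exI[of _ "D * nat d"]) auto
qed

lemma positive_integral_multiple:
  fixes q :: "'i \<Rightarrow> rat"
  assumes "finite I" "\<forall>i\<in>I. 0 < q i"
  shows "\<exists>D>0. \<exists>z::'i \<Rightarrow> nat. \<forall>i\<in>I. 0 < z i \<and> of_nat (z i) = D * q i"
proof -
  obtain D :: nat where "0 < D" and D: "\<forall>i\<in>I. of_nat D * q i \<in> \<int>"
    using common_denominator[OF assms(1)] by blast
  define z where "z i = nat \<lfloor>of_nat D * q i\<rfloor>" for i
  have "0 < z i \<and> of_nat (z i) = of_nat D * q i" if i: "i \<in> I" for i
  proof -
    obtain k where k: "of_nat D * q i = of_int k"
      using D i by (auto elim: Ints_cases)
    moreover have "0 < of_nat D * q i"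
      using \<open>0 < D\<close> assms(2) i by simp
    ultimately have "0 < k"
      by simp
    then show ?thesis
      unfolding z_def k by simp
  qed
  then show ?thesis
    using \<open>0 < D\<close> by (intro exI[of _ "of_nat D"]) auto
qed

lemma S_val_eq:
  assumes "l \<in> {1..n}"
  shows "S_val n a l = - of_int (\<Sum>k\<in>{1..n} - {l}. a k) / of_int (a l)"
  using assms by (simp add: S_val_def sum.remove)

lemma not_multiple_imp_cross_ne:
  assumes "\<not> is_multiple n a A" "a l \<noteq> 0"
  shows "\<exists>k\<in>{1..n}. a l * A k \<noteq> A l * a k"
proof (rule ccontr)
  assume "\<not> ?thesis"
  then have "of_int (A k) = of_int (A l) / of_int (a l) * (of_int (a k) :: rat)" if "k \<in> {1..n}" for k
    using that assms(2) by (simp add: field_simps flip: of_int_mult)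
  then show False
    using assms(1) unfolding is_multiple_def by blast
qed

lemma avoid_zeros_of_affine_functions:
  fixes \<beta> c :: "'j \<Rightarrow> 'a::{idom,ring_char_0}"
  assumes "finite J" "\<forall>j\<in>J. \<beta> j \<noteq> 0"
  shows "\<exists>z\<le>card J. \<forall>j\<in>J. c j + \<beta> j * of_nat z \<noteq> 0"
proof -
  define root where "root j = (SOME z. c j + \<beta> j * of_nat z = 0)" for j
  define bad where "bad = {z. \<exists>j\<in>J. c j + \<beta> j * of_nat z = 0}"
  have "bad \<subseteq> root ` J"
  proof
    fix z assume "z \<in> bad"
    then obtain j where j: "j \<in> J" "c j + \<beta> j * of_nat z = 0"
      unfolding bad_def by blast
    have "c j + \<beta> j * of_nat (root j) = 0"
      using j(2) unfolding root_def by (rule someI)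
    with j(2) have "\<beta> j * of_nat (root j) = \<beta> j * of_nat z"
      by (metis add_left_cancel)
    with j(1) assms(2) have "root j = z"
      by simp
    with j(1) show "z \<in> root ` J" by blast
  qed
  then have "finite bad" "card bad \<le> card J"
    using assms(1) card_image_le[OF assms(1), of root]
    by (auto intro: finite_subset dest: card_mono[rotated])
  have "\<not> {0..card J} \<subseteq> bad"
  proof
    assume "{0..card J} \<subseteq> bad"
    then have "card {0..card J} \<le> card bad"
      by (rule card_mono[OF \<open>finite bad\<close>])
    with \<open>card bad \<le> card J\<close> show False
      by simp
  qed
  then show ?thesis
    unfolding bad_def by auto
qed

lemma avoid_zeros_of_affine_forms:
  fixes \<beta> :: "'j \<Rightarrow> 'k \<Rightarrow> 'a::{idom,ring_char_0}" and c :: "'j \<Rightarrow> 'a"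
  assumes "finite P" "finite J" "\<forall>j\<in>J. \<exists>k\<in>P. \<beta> j k \<noteq> 0"
  shows "\<exists>t. (\<forall>k. t k \<le> card J) \<and> (\<forall>j\<in>J. c j + (\<Sum>k\<in>P. \<beta> j k * of_nat (t k)) \<noteq> 0)"
  using assms
proof (induction P arbitrary: J c rule: finite_induct)
  case empty
  then show ?case by (intro exI[of _ "\<lambda>_. 0"]) auto
next
  case (insert p P)
  \<comment> \<open>the induction hypothesis handles the forms without a \<open>t p\<close> term; \<open>t p\<close> then avoids the zeros of the others\<close>
  define J0 where "J0 = {j\<in>J. \<beta> j p = 0}"
  have "finite J0" "\<forall>j\<in>J0. \<exists>k\<in>P. \<beta> j k \<noteq> 0"
    using insert.prems unfolding J0_def by auto
  then obtain t0 where t0_le: "\<forall>k. t0 k \<le> card J0"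
    and t0: "\<forall>j\<in>J0. c j + (\<Sum>k\<in>P. \<beta> j k * of_nat (t0 k)) \<noteq> 0"
    using insert.IH[of J0 c] by blast
  define c' where "c' j = c j + (\<Sum>k\<in>P. \<beta> j k * of_nat (t0 k))" for j
  have "finite (J - J0)" "\<forall>j\<in>J - J0. \<beta> j p \<noteq> 0"
    using insert.prems(1) unfolding J0_def by auto
  then obtain z where "z \<le> card (J - J0)" and z: "\<forall>j\<in>J - J0. c' j + \<beta> j p * of_nat z \<noteq> 0"
    using avoid_zeros_of_affine_functions[of "J - J0" "\<lambda>j. \<beta> j p" c'] by blast
  have "card J0 \<le> card J" "card (J - J0) \<le> card J"
    using insert.prems(1) unfolding J0_def by (simp_all add: card_mono)
  define t where "t = t0(p := z)"
  have "(\<Sum>k\<in>P. \<beta> j k * of_nat (t k)) = (\<Sum>k\<in>P. \<beta> j k * of_nat (t0 k))" for j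
    using insert.hyps(2) unfolding t_def by (intro sum.cong) auto
  then have sum_t: "c j + (\<Sum>k\<in>insert p P. \<beta> j k * of_nat (t k)) = c' j + \<beta> j p * of_nat z" for j
    using insert.hyps unfolding c'_def t_def by (simp add: algebra_simps)
  have "c j + (\<Sum>k\<in>insert p P. \<beta> j k * of_nat (t k)) \<noteq> 0" if "j \<in> J" for j
    using t0 z that unfolding sum_t c'_def J0_def by (cases "\<beta> j p = 0") auto
  moreover have "t k \<le> card J" for k
    using t0_le \<open>z \<le> card (J - J0)\<close> \<open>card J0 \<le> card J\<close> \<open>card (J - J0) \<le> card J\<close>
    by (auto simp: t_def intro: le_trans)
  ultimately show ?case by blast
qed

lemma abs_sum_mult_le:
  fixes a y :: "'i \<Rightarrow> 'a::linordered_idom"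
  assumes "\<forall>k\<in>P. 0 \<le> y k \<and> y k \<le> T"
  shows "\<bar>\<Sum>k\<in>P. a k * y k\<bar> \<le> (\<Sum>k\<in>P. \<bar>a k\<bar>) * T"
proof -
  have "\<bar>\<Sum>k\<in>P. a k * y k\<bar> \<le> (\<Sum>k\<in>P. \<bar>a k\<bar> * \<bar>y k\<bar>)"
    by (rule order_trans[OF sum_abs]) (simp add: abs_mult)
  also have "\<dots> \<le> (\<Sum>k\<in>P. \<bar>a k\<bar> * T)"
    using assms by (intro sum_mono mult_left_mono) auto
  finally show ?thesis
    by (simp add: sum_distrib_right)
qed

lemma lin_form_at_parametrized_point:
  fixes x :: "nat \<Rightarrow> nat" and a A t :: "nat \<Rightarrow> int" and n l :: nat
  defines "P \<equiv> {1..n} - {l}"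
  assumes l: "l \<in> {1..n}"
    and S: "S = (\<Sum>k\<in>P. a k)" and ratio: "R' * a l = - R * S"
    and x_l: "int (x l) = R' * (X + (M + (\<Sum>k\<in>P. a k * t k)) * d)"
    and x_k: "\<forall>k\<in>P. int (x k) = R * (X + (M + S * t k) * d)"
  shows "a l * lin_form n A x
    = R * (X + M * d) * (a l * (\<Sum>k\<in>P. A k) - A l * S) + R * d * S * (\<Sum>k\<in>P. (a l * A k - A l * a k) * t k)"
proof -
  have split: "lin_form n A x = A l * int (x l) + (\<Sum>k\<in>P. A k * int (x k))"
    unfolding lin_form_def P_def using l by (simp add: sum.remove)
  have sum_P: "(\<Sum>k\<in>P. A k * int (x k)) = R * (X + M * d) * (\<Sum>k\<in>P. A k) + R * d * S * (\<Sum>k\<in>P. A k * t k)"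
    using x_k by (simp add: sum_distrib_left sum.distrib algebra_simps)
  have term_l: "a l * (A l * int (x l)) = - (R * S * A l * (X + (M + (\<Sum>k\<in>P. a k * t k)) * d))"
    unfolding x_l using ratio by (metis (no_types, lifting) minus_mult_left mult.assoc mult.commute)
  have cross: "(\<Sum>k\<in>P. (a l * A k - A l * a k) * t k) = a l * (\<Sum>k\<in>P. A k * t k) - A l * (\<Sum>k\<in>P. a k * t k)"
    by (simp add: sum_distrib_left sum_subtractf algebra_simps)
  show ?thesis
    unfolding split sum_P distrib_left[of "a l"] term_l cross by (simp add: algebra_simps)
qed

lemma solution_in_dilated_progressions:
  fixes a :: "nat \<Rightarrow> int" and R R' s d K :: nat and ineqs :: "(nat \<Rightarrow> int) list"
  assumes nonzero: "\<forall>i\<in>{1..n}. a i \<noteq> 0" and l: "l \<in> {1..n}"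
    and ratio: "of_nat R' = of_nat R * S_val n a l"
    and "0 < R" "0 < R'" "0 < d"
    and not_multiple: "\<forall>A\<in>set ineqs. \<not> is_multiple n a A"
    and K: "2 * nat (\<Sum>i=1..n. \<bar>a i\<bar>) * card (set ineqs) \<le> K"
  shows "\<exists>x. (\<forall>k\<in>{1..n}. \<exists>u\<le>K. x k = (if k = l then R' else R) * (s + u * d)) \<and>
             lin_form n a x = 0 \<and> (\<forall>A\<in>set ineqs. lin_form n A x \<noteq> 0)"
proof -
  define P where "P = {1..n} - {l}"
  define S where "S = (\<Sum>k\<in>P. a k)"
  define M where "M = (\<Sum>i=1..n. \<bar>a i\<bar>) * int (card (set ineqs))"
  have "a l \<noteq> 0"
    using nonzero l by blast
  have ratio_int: "int R' * a l = - int R * S"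
  proof -
    have "(of_int (int R' * a l) :: rat) = of_nat R * S_val n a l * of_int (a l)"
      using ratio by simp
    also have "\<dots> = of_int (- int R * S)"
      using S_val_eq[OF l] \<open>a l \<noteq> 0\<close> unfolding S_def P_def by simp
    finally show ?thesis
      by (simp only: of_int_eq_iff)
  qed
  then have "S \<noteq> 0"
    using \<open>a l \<noteq> 0\<close> \<open>0 < R'\<close> by auto
  define c where "c A = int R * (int s + M * int d) * (a l * (\<Sum>k\<in>P. A k) - A l * S)" for A
  define \<beta> where "\<beta> A k = int R * int d * S * (a l * A k - A l * a k)" for A k
  have "\<exists>k\<in>P. \<beta> A k \<noteq> 0" if A: "A \<in> set ineqs" for A
  proof -
    obtain k where "k \<in> {1..n}" "a l * A k \<noteq> A l * a k"
      using not_multiple_imp_cross_ne[of n a A l] not_multiple A \<open>a l \<noteq> 0\<close> by blast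
    moreover from this have "k \<noteq> l"
      by auto
    ultimately show ?thesis
      using \<open>0 < R\<close> \<open>0 < d\<close> \<open>S \<noteq> 0\<close> unfolding \<beta>_def P_def by auto
  qed
  then obtain t where t_le: "\<forall>k. t k \<le> card (set ineqs)"
    and t: "\<forall>A\<in>set ineqs. c A + (\<Sum>k\<in>P. \<beta> A k * of_nat (t k)) \<noteq> 0"
    using avoid_zeros_of_affine_forms[of P "set ineqs" \<beta> c] unfolding P_def by auto
  \<comment> \<open>the equation holds for every \<open>t\<close>; the offset \<open>M\<close> keeps the multipliers \<open>V k\<close>, \<open>W\<close> in \<open>{0..2M}\<close>\<close>
  define V where "V k = M + S * int (t k)" for k
  define W where "W = M + (\<Sum>k\<in>P. a k * int (t k))"
  have bound: "\<bar>\<Sum>k\<in>P. a k * int (y k)\<bar> \<le> M" if "\<forall>k. y k \<le> card (set ineqs)" for y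
  proof -
    have "\<bar>\<Sum>k\<in>P. a k * int (y k)\<bar> \<le> (\<Sum>k\<in>P. \<bar>a k\<bar>) * int (card (set ineqs))"
      using that by (intro abs_sum_mult_le) simp
    also have "\<dots> \<le> M"
      unfolding M_def P_def by (intro mult_right_mono sum_mono2) auto
    finally show ?thesis .
  qed
  have "S * int (t k) = (\<Sum>j\<in>P. a j * int (t k))" for k
    unfolding S_def by (simp add: sum_distrib_right)
  then have V: "0 \<le> V k \<and> V k \<le> 2 * M" for k
    using bound[of "\<lambda>_. t k"] t_le unfolding V_def by (simp add: abs_le_iff)
  have W: "0 \<le> W \<and> W \<le> 2 * M"
    using bound[of t] t_le unfolding W_def by (simp add: abs_le_iff)
  have "0 \<le> (\<Sum>i=1..n. \<bar>a i\<bar>)"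
    by (simp add: sum_nonneg)
  then have "int (2 * nat (\<Sum>i=1..n. \<bar>a i\<bar>) * card (set ineqs)) = 2 * M"
    unfolding M_def by simp
  then have "2 * M \<le> int K"
    using K by linarith
  define x where "x k = (if k = l then R' * (s + nat W * d) else R * (s + nat (V k) * d))" for k
  have lin: "a l * lin_form n A x = c A + (\<Sum>k\<in>P. \<beta> A k * of_nat (t k))" for A
  proof -
    have "int (x l) = int R' * (int s + (M + (\<Sum>k\<in>P. a k * int (t k))) * int d)"
      using W by (simp add: x_def W_def)
    moreover have "\<forall>k\<in>P. int (x k) = int R * (int s + (M + S * int (t k)) * int d)"
      using V by (auto simp: x_def P_def V_def)
    ultimately have "a l * lin_form n A x = c A + int R * int d * S * (\<Sum>k\<in>P. (a l * A k - A l * a k) * int (t k))"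
      unfolding c_def P_def
      by (rule lin_form_at_parametrized_point[OF l S_def[unfolded P_def] ratio_int])
    then show ?thesis
      unfolding \<beta>_def by (simp add: sum_distrib_left mult.assoc)
  qed
  have "a l * lin_form n a x = 0"
    unfolding lin c_def \<beta>_def S_def by simp
  then have "lin_form n a x = 0"
    using \<open>a l \<noteq> 0\<close> by simp
  moreover have "lin_form n A x \<noteq> 0" if "A \<in> set ineqs" for A
    using t that lin[of A] by auto
  moreover have "\<exists>u\<le>K. x k = (if k = l then R' else R) * (s + u * d)" for k
  proof (cases "k = l")
    case True
    then show ?thesis
      using W \<open>2 * M \<le> int K\<close> by (intro exI[of _ "nat W"]) (simp add: x_def nat_le_iff)
  next
    case False
    then show ?thesis
      using V[of k] \<open>2 * M \<le> int K\<close> by (intro exI[of _ "nat (V k)"]) (simp add: x_def nat_le_iff)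
  qed
  ultimately show ?thesis
    by blast
qed

lemma linked_monochromatic_progressions:
  fixes chi :: "nat \<Rightarrow> nat" and c :: "nat \<Rightarrow> nat \<Rightarrow> rat"
  assumes colouring: "\<forall>x. 0 < x \<longrightarrow> chi x < m"
    and pos: "\<forall>i\<in>{1..m}. \<forall>j\<in>{1..m}. i \<le> j \<longrightarrow> 0 < c i j"
    and entries: "\<forall>i\<in>{1..m}. \<forall>j\<in>{1..m}. i \<le> j \<longrightarrow> (\<exists>l\<in>{1..n}. c i j = S_val n a l)"
    and link: "linkage_property m c"
  shows "\<exists>R R' l s d col. l \<in> {1..n} \<and> 0 < R \<and> 0 < R' \<and> 0 < s \<and> 0 < d \<and>
           of_nat R' = of_nat R * S_val n a l \<and>
           (\<forall>u\<le>K. chi (R * (s + u * d)) = col \<and> chi (R' * (s + u * d)) = col)"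
proof -
  obtain D z where z: "\<forall>i\<in>{..m}. 0 < z i \<and> of_nat (z i) = D * augmented_first_row c i"
    using positive_integral_multiple[of "{..m}" "augmented_first_row c"] augmented_first_row_pos[OF pos]
    by blast
  then have z_pos: "\<forall>i\<le>m. 0 < z i" and z_eq: "\<forall>i\<le>m. of_nat (z i) = D * augmented_first_row c i"
    by simp_all
  obtain i j s d col where ij: "i < j" "j \<le> m" and "0 < s" "0 < d"
    and mono: "\<forall>u\<le>K. chi (z i * (s + u * d)) = col \<and> chi (z j * (s + u * d)) = col"
    using monochromatic_dilated_progressions[OF colouring z_pos, of K] by blast
  obtain l where l: "l \<in> {1..n}" "augmented_first_row c j = augmented_first_row c i * S_val n a l"
    using augmented_first_row_ratio[OF entries link ij] by blast
  have "of_nat (z j) = of_nat (z i) * S_val n a l"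
    using z_eq ij l(2) by (simp add: mult.assoc)
  moreover have "0 < z i" "0 < z j"
    using z_pos ij by simp_all
  ultimately show ?thesis
    using l(1) \<open>0 < s\<close> \<open>0 < d\<close> mono by blast
qed

theorem theorem3:
  fixes n m :: nat and a :: "nat \<Rightarrow> int" and c :: "nat \<Rightarrow> nat \<Rightarrow> rat"
  assumes nonzero: "\<forall>i\<in>{1..n}. a i \<noteq> 0"
    and ut: "upper_triangular m c"
    and pos: "\<forall>i\<in>{1..m}. \<forall>j\<in>{1..m}. i \<le> j \<longrightarrow> 0 < c i j"
    and entries: "\<forall>i\<in>{1..m}. \<forall>j\<in>{1..m}. i \<le> j \<longrightarrow> (\<exists>l\<in>{1..n}. c i j = S_val n a l)"
    and link: "linkage_property m c"
  shows "strongly_m_regular m n a"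
  unfolding strongly_m_regular_def m_regular_def
proof (intro allI impI)
  fix ineqs :: "(nat \<Rightarrow> int) list" and chi :: "nat \<Rightarrow> nat"
  assume not_multiple: "\<forall>A\<in>set ineqs. \<not> is_multiple n a A"
    and colouring: "\<forall>x. 0 < x \<longrightarrow> chi x < m"
  define K where "K = 2 * nat (\<Sum>i=1..n. \<bar>a i\<bar>) * card (set ineqs)"
  obtain R R' l s d col where l: "l \<in> {1..n}" and "0 < R" "0 < R'" "0 < s" "0 < d"
    and ratio: "of_nat R' = of_nat R * S_val n a l"
    and mono: "\<forall>u\<le>K. chi (R * (s + u * d)) = col \<and> chi (R' * (s + u * d)) = col"
    using linked_monochromatic_progressions[OF colouring pos entries link, of K] by blast
  obtain x where x: "\<forall>k\<in>{1..n}. \<exists>u\<le>K. x k = (if k = l then R' else R) * (s + u * d)"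
    and solution: "lin_form n a x = 0" "\<forall>A\<in>set ineqs. lin_form n A x \<noteq> 0"
    using solution_in_dilated_progressions[OF nonzero l ratio \<open>0 < R\<close> \<open>0 < R'\<close> \<open>0 < d\<close>
        not_multiple K_def[symmetric, THEN eq_refl]]
    by blast
  have "0 < x k \<and> chi (x k) = col" if k: "k \<in> {1..n}" for k
  proof -
    obtain u where "u \<le> K" "x k = (if k = l then R' else R) * (s + u * d)"
      using x k by blast
    then show ?thesis
      using mono \<open>0 < s\<close> \<open>0 < R\<close> \<open>0 < R'\<close> by (cases "k = l") simp_all
  qed
  then show "\<exists>x. (\<forall>i\<in>{1..n}. 0 < x i) \<and> (\<exists>col. \<forall>i\<in>{1..n}. chi (x i) = col) \<and>
        lin_form n a x = 0 \<and> (\<forall>A\<in>set ineqs. lin_form n A x \<noteq> 0)"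
    using solution by blast
qed

end
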